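(* Let $\beta<1$ be real and $\alpha=1$. Then the $\beta$-Ces\`aro operator $C_\beta$ maps $\mathcal{B}_1^0$ into $\mathcal{B}_1^0$ and is a bounded linear operator from $(\mathcal{B}_1^0,\|\cdot\|_{\mathcal{B}_1})$ to itself.
   Context: $\mathbb{D}=\{z\in\mathbb{C}:|z|<1\}$. For $\alpha>0$, the $\alpha$-Bloch space $\mathcal{B}_\alpha$ is the space of analytic functions $f$ on $\mathbb{D}$ with $\|f\|_{\mathcal{B}_\alpha}:=\sup_{z\in\mathbb{D}}(1-|z|^2)^\alpha|f'(z)|<\infty$. $\mathcal{B}_\alpha^0=\{f\in\mathcal{B}_\alpha: f(0)=0\}$, normed by $\|\cdot\|_{\mathcal{B}_\alpha}$. For $\beta\in\mathbb{R}$, the $\beta$-Ces\`aro operator is $C_\beta(f)(z)=\int_0^z \frac{f(w)}{w(1-w)^\beta}\,dw$ for analytic $f$ on $\mathbb{D}$ with $f(0)=0$, where $(1-w)^{\beta}$ is defined by the principal branch. *)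

theory Defs
  imports "HOL-Complex_Analysis.Complex_Analysis"
begin

definition bloch_set :: "real \<Rightarrow> (complex \<Rightarrow> complex) \<Rightarrow> real set" where
  "bloch_set \<alpha> f = {(1 - (cmod z)^2) powr \<alpha> * cmod (deriv f z) | z. z \<in> ball 0 1}"

definition bloch_space :: "real \<Rightarrow> (complex \<Rightarrow> complex) set" where
  "bloch_space \<alpha> = {f. f holomorphic_on ball 0 1 \<and> bdd_above (bloch_set \<alpha> f)}"

definition bloch_norm :: "real \<Rightarrow> (complex \<Rightarrow> complex) \<Rightarrow> real" where
  "bloch_norm \<alpha> f = Sup (bloch_set \<alpha> f)"

definition bloch0 :: "real \<Rightarrow> (complex \<Rightarrow> complex) set" where
  "bloch0 \<alpha> = {f \<in> bloch_space \<alpha>. f 0 = 0}"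

text \<open>beta-Cesaro operator: integral along the segment [0,z]; (1-w) powr beta is the
  principal branch (Re(1-w) > 0 on the disc). The value of the integrand at the single
  point w = 0 is irrelevant for the integral.\<close>
definition cesaro :: "real \<Rightarrow> (complex \<Rightarrow> complex) \<Rightarrow> complex \<Rightarrow> complex" where
  "cesaro \<beta> f z = contour_integral (linepath 0 z)
      (\<lambda>w. f w / (w * (1 - w) powr (complex_of_real \<beta>)))"

end

theory Submission
  imports Defs
begin

(* The derivative of C_beta f is f(z) / (z (1 - z)^beta). For f in B_1^0 with norm M, the
  mean value inequality on the disc of radius |z| gives (1 - |z|^2) |f(z)/z| <= M, which
  settles beta <= 0 since then |1 - z|^(-beta) <= 2^(-beta). For 0 < beta < 1 the factor
  |1 - z|^(-beta) <= (1 - |z|)^(-beta) is unbounded; it is compensated by integrating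
  |f'(w)| <= M (1 - |w|)^(beta - 2) along the radius, which gives
  |f(z)| <= M (1 - |z|)^(beta - 1) / (1 - beta) and hence
  (1 - |z|^2) |f(z)/z| <= 4 M (1 - |z|)^beta / (1 - beta). *)

lemma one_minus_notin_nonpos_Reals:
  fixes w :: complex
  assumes "cmod w < 1"
  shows "1 - w \<notin> \<real>\<^sub>\<le>\<^sub>0"
proof
  assume "1 - w \<in> \<real>\<^sub>\<le>\<^sub>0"
  then have "Re (1 - w) \<le> 0" by (auto simp: complex_nonpos_Reals_iff)
  with complex_Re_le_cmod[of w] assms show False by simp
qed

definition divide_by_z :: "(complex \<Rightarrow> complex) \<Rightarrow> complex \<Rightarrow> complex" where
  "divide_by_z f w = (if w = 0 then deriv f 0 else f w / w)"

lemma holomorphic_on_divide_by_z: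
  assumes "f holomorphic_on S" "open S" "f 0 = 0"
  shows "divide_by_z f holomorphic_on S"
proof -
  have "divide_by_z f = (\<lambda>w. if w = 0 then deriv f 0 else (f w - f 0) / (w - 0))"
    by (intro ext) (simp add: assms(3) divide_by_z_def)
  with pole_lemma_open[OF assms(1,2)] show ?thesis by simp
qed

definition cesaro_deriv :: "real \<Rightarrow> (complex \<Rightarrow> complex) \<Rightarrow> complex \<Rightarrow> complex" where
  "cesaro_deriv \<beta> f w = divide_by_z f w / (1 - w) powr complex_of_real \<beta>"

lemma holomorphic_on_cesaro_deriv:
  assumes "f holomorphic_on ball 0 1" "f 0 = 0"
  shows "cesaro_deriv \<beta> f holomorphic_on ball 0 1"
  unfolding cesaro_deriv_def[abs_def]
proof (intro holomorphic_on_divide holomorphic_on_divide_by_z assms open_ball)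
  show "(\<lambda>w. (1 - w) powr complex_of_real \<beta>) holomorphic_on ball 0 1"
    using one_minus_notin_nonpos_Reals by (intro holomorphic_intros) auto
  show "(1 - w) powr complex_of_real \<beta> \<noteq> 0" if "w \<in> ball 0 1" for w
    using that by (auto simp: powr_def)
qed

lemma has_contour_integral_linepath_spike_start:
  assumes "(f has_contour_integral i) (linepath a b)"
    and "\<And>w. w \<in> closed_segment a b \<Longrightarrow> w \<noteq> a \<Longrightarrow> g w = f w"
  shows "(g has_contour_integral i) (linepath a b)"
proof (cases "a = b")
  case True
  with assms(1) show ?thesis by simp
next
  case False
  have "((\<lambda>t. f (linepath a b t) * (b - a)) has_integral i) {0..1}"
    using assms(1) by (simp add: has_contour_integral_linepath)
  then have "((\<lambda>t. g (linepath a b t) * (b - a)) has_integral i) {0..1}"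
  proof (rule has_integral_spike_finite[of "{0}", rotated 2])
    fix t :: real assume "t \<in> {0..1} - {0}"
    then have "linepath a b t \<in> closed_segment a b"
      by (intro linepath_in_path) simp
    moreover have "linepath a b t \<noteq> a"
      using False \<open>t \<in> {0..1} - {0}\<close> by (simp add: linepath_def algebra_simps)
    ultimately show "g (linepath a b t) * (b - a) = f (linepath a b t) * (b - a)"
      using assms(2) by simp
  qed simp
  then show ?thesis by (simp add: has_contour_integral_linepath)
qed

lemma cesaro_primitive:
  assumes "f holomorphic_on ball 0 1" "f 0 = 0"
  obtains G where
    "\<And>z. z \<in> ball 0 1 \<Longrightarrow> (G has_field_derivative cesaro_deriv \<beta> f z) (at z)"
    "\<And>z. z \<in> ball 0 1 \<Longrightarrow> ((\<lambda>w. f w / (w * (1 - w) powr complex_of_real \<beta>))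
        has_contour_integral G z - G 0) (linepath 0 z)"
proof -
  obtain G where G: "\<And>z. z \<in> ball 0 1 \<Longrightarrow>
      (G has_field_derivative cesaro_deriv \<beta> f z) (at z within ball 0 1)"
    using holomorphic_convex_primitive'[OF convex_ball open_ball
        holomorphic_on_cesaro_deriv[OF assms, of \<beta>]] by blast
  have integral: "((\<lambda>w. f w / (w * (1 - w) powr complex_of_real \<beta>)) has_contour_integral G z - G 0)
      (linepath 0 z)" if z: "z \<in> ball 0 1" for z
  \<comment> \<open>the integrand of cesaro takes the junk value 0 at w = 0\<close>
  proof (rule has_contour_integral_linepath_spike_start)
    have "path_image (linepath 0 z) \<subseteq> ball 0 1"
      using z by (simp add: closed_segment_subset convex_ball)
    from contour_integral_primitive[OF G _ this]
    show "(cesaro_deriv \<beta> f has_contour_integral G z - G 0) (linepath 0 z)" by simp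
  qed (simp add: cesaro_deriv_def divide_by_z_def)
  have deriv: "(G has_field_derivative cesaro_deriv \<beta> f z) (at z)" if "z \<in> ball 0 1" for z
    using G[OF that] by (simp only: at_within_open[OF that open_ball])
  show thesis by (rule that[OF deriv integral])
qed

lemma
  assumes "f holomorphic_on ball 0 1" "f 0 = 0" "z \<in> ball 0 1"
  shows has_contour_integral_cesaro:
      "((\<lambda>w. f w / (w * (1 - w) powr complex_of_real \<beta>)) has_contour_integral cesaro \<beta> f z)
        (linepath 0 z)"
    and cesaro_has_field_derivative: "(cesaro \<beta> f has_field_derivative cesaro_deriv \<beta> f z) (at z)"
proof -
  obtain G where G_deriv: "\<And>z. z \<in> ball 0 1 \<Longrightarrow> (G has_field_derivative cesaro_deriv \<beta> f z) (at z)"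
    and G_integral: "\<And>z. z \<in> ball 0 1 \<Longrightarrow> ((\<lambda>w. f w / (w * (1 - w) powr complex_of_real \<beta>))
        has_contour_integral G z - G 0) (linepath 0 z)"
    using cesaro_primitive[OF assms(1,2)] by blast
  have cesaro_eq: "cesaro \<beta> f w = G w - G 0" if "w \<in> ball 0 1" for w
    unfolding cesaro_def using G_integral[OF that] by (rule contour_integral_unique)
  show "((\<lambda>w. f w / (w * (1 - w) powr complex_of_real \<beta>)) has_contour_integral cesaro \<beta> f z)
      (linepath 0 z)"
    using G_integral[OF assms(3)] cesaro_eq[OF assms(3)] by simp
  have "((\<lambda>w. G w - G 0) has_field_derivative cesaro_deriv \<beta> f z) (at z)"
    using DERIV_diff[OF G_deriv[OF assms(3)] DERIV_const[of "G 0"]] by simp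
  then show "(cesaro \<beta> f has_field_derivative cesaro_deriv \<beta> f z) (at z)"
    by (rule has_field_derivative_transform_within_open[OF _ open_ball assms(3)])
      (simp add: cesaro_eq)
qed

lemma cesaro_linear:
  assumes "f holomorphic_on ball 0 1" "f 0 = 0" "g holomorphic_on ball 0 1" "g 0 = 0"
    and "z \<in> ball 0 1"
  shows "cesaro \<beta> (\<lambda>w. a * f w + b * g w) z = a * cesaro \<beta> f z + b * cesaro \<beta> g z"
proof -
  have "((\<lambda>w. a * (f w / (w * (1 - w) powr complex_of_real \<beta>))
          + b * (g w / (w * (1 - w) powr complex_of_real \<beta>)))
        has_contour_integral a * cesaro \<beta> f z + b * cesaro \<beta> g z) (linepath 0 z)"
    using assms by (intro has_contour_integral_add has_contour_integral_lmul has_contour_integral_cesaro)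
  also have "(\<lambda>w. a * (f w / (w * (1 - w) powr complex_of_real \<beta>))
          + b * (g w / (w * (1 - w) powr complex_of_real \<beta>)))
      = (\<lambda>w. (a * f w + b * g w) / (w * (1 - w) powr complex_of_real \<beta>))"
    by (simp add: fun_eq_iff add_divide_distrib)
  finally show ?thesis
    unfolding cesaro_def by (rule contour_integral_unique)
qed

lemma has_real_derivative_one_minus_powr:
  fixes \<gamma> t :: real
  assumes "\<gamma> < 1" "t < 1"
  shows "((\<lambda>t. (1 - t) powr (\<gamma> - 1) / (1 - \<gamma>)) has_real_derivative (1 - t) powr (\<gamma> - 2)) (at t)"
proof -
  have "((\<lambda>t. (1 - t) powr (\<gamma> - 1) / (1 - \<gamma>)) has_real_derivative
      (\<gamma> - 1) * (1 - t) powr (\<gamma> - 1 - 1) * (0 - 1) / (1 - \<gamma>)) (at t)"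
    using assms by (auto intro!: derivative_eq_intros)
  moreover have "(\<gamma> - 1) * (1 - t) powr (\<gamma> - 1 - 1) * (0 - 1) / (1 - \<gamma>) = (1 - t) powr (\<gamma> - 2)"
    using assms by (simp add: field_simps)
  ultimately show ?thesis by simp
qed

definition cesaro_norm_bound :: "real \<Rightarrow> real" where
  "cesaro_norm_bound \<beta> = (if 0 < \<beta> then 4 / (1 - \<beta>) else 2 powr - \<beta>)"

context
  fixes f :: "complex \<Rightarrow> complex" and M :: real
  assumes holo: "f holomorphic_on ball 0 1" and f0: "f 0 = 0"
    and bloch_bound: "\<And>w. w \<in> ball 0 1 \<Longrightarrow> (1 - (cmod w)^2) * cmod (deriv f w) \<le> M"
begin

lemma bloch_bound_nonneg: "0 \<le> M"
proof -
  have "(1 - (cmod 0)^2) * cmod (deriv f 0) \<le> M" by (rule bloch_bound) simp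
  then show ?thesis by (simp add: order_trans[OF norm_ge_zero])
qed

lemma bloch_bound_divide_by_z:
  assumes "z \<in> ball 0 1"
  shows "(1 - (cmod z)^2) * cmod (divide_by_z f z) \<le> M"
proof (cases "z = 0")
  case True
  then show ?thesis using bloch_bound[of 0] by (simp add: divide_by_z_def)
next
  case False
  define r where "r = cmod z"
  have r: "0 < r" "r < 1" using False assms by (auto simp: r_def)
  have r2: "0 < 1 - r^2" using r by (simp add: power_less_one_iff)
  have sub: "cball 0 r \<subseteq> ball 0 1" using r by auto
  have deriv_bound: "cmod (deriv f w) \<le> M / (1 - r^2)" if w: "w \<in> cball 0 r" for w
  proof -
    have "1 - r^2 \<le> 1 - (cmod w)^2" using w by (simp add: power_mono)
    then have "(1 - r^2) * cmod (deriv f w) \<le> M"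
      using bloch_bound[of w] sub w by (meson mult_right_mono norm_ge_zero order_trans subsetD)
    then show ?thesis using r2 by (simp add: field_simps)
  qed
  have "(f has_field_derivative deriv f w) (at w within cball 0 r)" if "w \<in> cball 0 r" for w
    using holomorphic_derivI[OF holo open_ball] sub that by (blast intro: has_field_derivative_at_within)
  then have "cmod (f z - f 0) \<le> M / (1 - r^2) * cmod (z - 0)"
    by (rule field_differentiable_bound[OF convex_cball _ deriv_bound]) (use r in \<open>auto simp: r_def\<close>)
  then have "(1 - r^2) * cmod (f z) / r \<le> M"
    using r r2 f0 by (simp add: r_def field_simps)
  then show ?thesis using False by (simp add: divide_by_z_def norm_divide r_def)
qed

lemma bloch_bound_deriv_powr:
  assumes "\<gamma> \<le> 1" "w \<in> ball 0 1"
  shows "cmod (deriv f w) \<le> M * (1 - cmod w) powr (\<gamma> - 2)"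
proof -
  have w: "0 < 1 - cmod w" "1 - cmod w \<le> 1" using assms(2) by auto
  have "(cmod w)^2 \<le> cmod w"
    using w by (simp add: power2_eq_square mult_left_le_one_le)
  then have "1 - cmod w \<le> 1 - (cmod w)^2" by simp
  with bloch_bound[OF assms(2)] have "(1 - cmod w) * cmod (deriv f w) \<le> M"
    by (meson mult_right_mono norm_ge_zero order_trans)
  then have "cmod (deriv f w) \<le> M * (1 - cmod w) powr (-1)"
    using w by (simp add: powr_minus field_simps)
  also have "\<dots> \<le> M * (1 - cmod w) powr (\<gamma> - 2)"
    using w assms(1) bloch_bound_nonneg by (intro mult_left_mono powr_mono') auto
  finally show ?thesis .
qed

lemma bloch_bound_growth_powr:
  assumes "0 \<le> \<gamma>" "\<gamma> < 1" "z \<in> ball 0 1"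
  shows "cmod (f z) \<le> M / (1 - \<gamma>) * (1 - cmod z) powr (\<gamma> - 1)"
proof (cases "z = 0")
  case True
  then show ?thesis using f0 bloch_bound_nonneg assms by simp
next
  case False
  define r where "r = cmod z"
  define e where "e = z / of_real r"
  have r: "0 < r" "r < 1" using False assms(3) by (auto simp: r_def)
  have e: "cmod e = 1" "of_real r * e = z" using r by (auto simp: e_def norm_divide r_def)
  define \<phi> where "\<phi> t = f (of_real t * e)" for t :: real
  define \<psi> where "\<psi> t = M * ((1 - t) powr (\<gamma> - 1) / (1 - \<gamma>))" for t :: real
  have radius_in_ball: "of_real t * e \<in> ball 0 1" if "0 \<le> t" "t \<le> r" for t
    using that r e by (simp add: norm_mult)
  have "continuous_on {0..r} \<phi>"
    unfolding \<phi>_def using holomorphic_on_imp_continuous_on[OF holo]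
    by (rule continuous_on_compose2) (auto intro!: continuous_intros radius_in_ball)
  moreover have "continuous_on {0..r} \<psi>"
    unfolding \<psi>_def using r assms by (auto intro!: continuous_intros)
  moreover have "(\<phi> has_vector_derivative e * deriv f (of_real t * e)) (at t)"
    if "0 < t" "t < r" for t
  proof -
    have "((\<lambda>t. of_real t * e) has_vector_derivative e) (at t)"
      by (auto intro!: derivative_eq_intros simp: has_vector_derivative_def scaleR_conv_of_real)
    from field_vector_diff_chain_at[OF this holomorphic_derivI[OF holo open_ball radius_in_ball]]
    show ?thesis using that unfolding \<phi>_def by (simp add: o_def)
  qed
  moreover have "(\<psi> has_vector_derivative M * (1 - t) powr (\<gamma> - 2)) (at t)"
    if "0 < t" "t < r" for t
    using DERIV_cmult[OF has_real_derivative_one_minus_powr, of \<gamma> t M] assms(2) that r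
    unfolding \<psi>_def by (simp add: has_real_derivative_iff_has_vector_derivative)
  moreover have "norm (e * deriv f (of_real t * e)) \<le> M * (1 - t) powr (\<gamma> - 2)"
    if "0 < t" "t < r" for t
  proof -
    have "norm (e * deriv f (of_real t * e)) = cmod (deriv f (of_real t * e))"
      using e by (simp add: norm_mult)
    also have "\<dots> \<le> M * (1 - cmod (of_real t * e)) powr (\<gamma> - 2)"
      using assms that by (intro bloch_bound_deriv_powr radius_in_ball) auto
    also have "cmod (of_real t * e) = t"
      using that e by (simp add: norm_mult)
    finally show ?thesis .
  qed
  ultimately have "norm (\<phi> r - \<phi> 0) \<le> \<psi> r - \<psi> 0"
    by (rule differentiable_bound_general[OF r(1)])
  moreover have "\<phi> r = f z" "\<phi> 0 = 0" "0 \<le> \<psi> 0"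
    using e f0 assms bloch_bound_nonneg by (auto simp: \<phi>_def \<psi>_def)
  ultimately show ?thesis by (simp add: \<psi>_def r_def)
qed

lemma bloch_bound_divide_by_z_powr:
  assumes "0 \<le> \<gamma>" "\<gamma> < 1" "z \<in> ball 0 1"
  shows "(1 - (cmod z)^2) * cmod (divide_by_z f z) \<le> 4 / (1 - \<gamma>) * M * (1 - cmod z) powr \<gamma>"
proof (cases "cmod z \<le> 1/2")
  case True
  have "1/2 \<le> (1 - cmod z) powr 1"
    using True by simp
  also have "\<dots> \<le> (1 - cmod z) powr \<gamma>"
    using assms by (intro powr_mono') auto
  finally have "1 \<le> 4 / (1 - \<gamma>) * (1 - cmod z) powr \<gamma>"
    using assms by (simp add: field_simps)
  from mult_left_mono[OF this bloch_bound_nonneg] bloch_bound_divide_by_z[OF assms(3)]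
  show ?thesis by (simp add: mult_ac)
next
  case False
  define r where "r = cmod z"
  have r: "1/2 < r" "r < 1" using False assms(3) by (auto simp: r_def)
  have "(1 - (cmod z)^2) * cmod (divide_by_z f z) = (1 - r^2) / r * cmod (f z)"
    using r by (auto simp: r_def divide_by_z_def norm_divide)
  also have "\<dots> \<le> 4 * (1 - r) * (M / (1 - \<gamma>) * (1 - r) powr (\<gamma> - 1))"
  proof (rule mult_mono)
    have "1 - r^2 = (1 - r) * (1 + r)" by (simp add: power2_eq_square algebra_simps)
    also have "\<dots> \<le> (1 - r) * (4 * r)" using r by (intro mult_left_mono) auto
    finally show "(1 - r^2) / r \<le> 4 * (1 - r)" using r by (simp add: pos_divide_le_eq mult_ac)
    show "cmod (f z) \<le> M / (1 - \<gamma>) * (1 - r) powr (\<gamma> - 1)"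
      using bloch_bound_growth_powr[OF assms] by (simp add: r_def)
  qed (use r in auto)
  also have "\<dots> = 4 / (1 - \<gamma>) * M * ((1 - r) powr (\<gamma> - 1) * (1 - r))"
    by (simp add: mult_ac)
  also have "(1 - r) powr (\<gamma> - 1) * (1 - r) = (1 - r) powr \<gamma>"
    using r powr_add[of "1 - r" "\<gamma> - 1" 1] by simp
  finally show ?thesis by (simp add: r_def)
qed

lemma bloch_bound_cesaro_deriv:
  assumes "\<beta> < 1" "z \<in> ball 0 1"
  shows "(1 - (cmod z)^2) * cmod (cesaro_deriv \<beta> f z) \<le> cesaro_norm_bound \<beta> * M"
proof -
  have dist_1: "1 - cmod z \<le> cmod (1 - z)" "cmod (1 - z) \<le> 2"
    using norm_triangle_ineq2[of 1 z] norm_triangle_ineq4[of 1 z] assms(2) by auto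
  have pos: "0 < 1 - cmod z" using assms(2) by simp
  then have "0 < cmod (1 - z)"
    using dist_1 by linarith
  then have "0 < cmod (1 - z) powr \<beta>"
    by simp
  moreover have "(1 - (cmod z)^2) * cmod (divide_by_z f z)
      \<le> cesaro_norm_bound \<beta> * M * cmod (1 - z) powr \<beta>"
  proof (cases "0 < \<beta>")
    case True
    have "(1 - (cmod z)^2) * cmod (divide_by_z f z) \<le> 4 / (1 - \<beta>) * M * (1 - cmod z) powr \<beta>"
      using assms True by (intro bloch_bound_divide_by_z_powr) auto
    also have "\<dots> \<le> 4 / (1 - \<beta>) * M * cmod (1 - z) powr \<beta>"
      using True dist_1 pos assms(1) bloch_bound_nonneg by (intro mult_left_mono powr_mono2) auto
    finally show ?thesis
      using True by (simp add: cesaro_norm_bound_def)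
  next
    case False
    have "1 = 2 powr - \<beta> * 2 powr \<beta>"
      by (simp add: powr_add[symmetric])
    also have "\<dots> \<le> 2 powr - \<beta> * cmod (1 - z) powr \<beta>"
      using False dist_1 pos by (intro mult_left_mono powr_mono2') auto
    finally have "M \<le> 2 powr - \<beta> * M * cmod (1 - z) powr \<beta>"
      using mult_left_mono[OF _ bloch_bound_nonneg] by (fastforce simp: mult_ac)
    with bloch_bound_divide_by_z[OF assms(2)] show ?thesis
      using False by (simp add: cesaro_norm_bound_def)
  qed
  ultimately show ?thesis
    by (simp add: cesaro_deriv_def norm_divide norm_powr_real_powr' pos_divide_le_eq mult_ac)
qed

end

lemma bloch_set_1:
  "bloch_set 1 f = {(1 - (cmod z)^2) * cmod (deriv f z) | z. z \<in> ball 0 1}"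
proof -
  have "(1 - (cmod z)^2) powr 1 = 1 - (cmod z)^2" if "z \<in> ball 0 1" for z :: complex
    using that by (simp add: abs_square_less_1 less_imp_le)
  then show ?thesis
    unfolding bloch_set_def by force
qed

lemma bloch_norm_upper:
  assumes "f \<in> bloch_space 1" "z \<in> ball 0 1"
  shows "(1 - (cmod z)^2) * cmod (deriv f z) \<le> bloch_norm 1 f"
  unfolding bloch_norm_def
  by (rule cSup_upper) (use assms in \<open>auto simp: bloch_set_1 bloch_space_def\<close>)

lemma bloch0_1I:
  assumes "g holomorphic_on ball 0 1" "g 0 = 0"
    and "\<And>z. z \<in> ball 0 1 \<Longrightarrow> (1 - (cmod z)^2) * cmod (deriv g z) \<le> K"
  shows "g \<in> bloch0 1" and "bloch_norm 1 g \<le> K"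
proof -
  have "bdd_above (bloch_set 1 g)"
    using assms(3) by (intro bdd_aboveI[of _ K]) (auto simp: bloch_set_1)
  then show "g \<in> bloch0 1"
    using assms(1,2) by (simp add: bloch0_def bloch_space_def)
  have "bloch_set 1 g \<noteq> {}"
    by (auto simp: bloch_set_1 intro!: exI[of _ 0])
  then show "bloch_norm 1 g \<le> K"
    unfolding bloch_norm_def using assms(3) by (intro cSup_least) (auto simp: bloch_set_1)
qed

lemma cesaro_bloch0:
  assumes "\<beta> < 1" "f \<in> bloch0 1"
  shows "cesaro \<beta> f \<in> bloch0 1"
    and "bloch_norm 1 (cesaro \<beta> f) \<le> cesaro_norm_bound \<beta> * bloch_norm 1 f"
proof -
  have f: "f holomorphic_on ball 0 1" "f 0 = 0" "f \<in> bloch_space 1"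
    using assms(2) by (auto simp: bloch0_def bloch_space_def)
  have holo: "cesaro \<beta> f holomorphic_on ball 0 1"
    unfolding holomorphic_on_open[OF open_ball]
    using cesaro_has_field_derivative[OF f(1,2)] by blast
  have bound: "(1 - (cmod z)^2) * cmod (deriv (cesaro \<beta> f) z)
      \<le> cesaro_norm_bound \<beta> * bloch_norm 1 f" if "z \<in> ball 0 1" for z
    using bloch_bound_cesaro_deriv[OF f(1,2) bloch_norm_upper[OF f(3)] assms(1) that]
      DERIV_imp_deriv[OF cesaro_has_field_derivative[OF f(1,2) that]]
    by simp
  have "cesaro \<beta> f 0 = 0"
    by (simp add: cesaro_def)
  with holo bound show "cesaro \<beta> f \<in> bloch0 1"
    and "bloch_norm 1 (cesaro \<beta> f) \<le> cesaro_norm_bound \<beta> * bloch_norm 1 f"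
    by (blast intro: bloch0_1I)+
qed

theorem theorem2p4:
  fixes \<beta> :: real
  assumes "\<beta> < 1"
  shows "(\<forall>f \<in> bloch0 1. cesaro \<beta> f \<in> bloch0 1)
       \<and> (\<forall>f \<in> bloch0 1. \<forall>g \<in> bloch0 1. \<forall>a b :: complex. \<forall>z \<in> ball 0 1.
            cesaro \<beta> (\<lambda>w. a * f w + b * g w) z = a * cesaro \<beta> f z + b * cesaro \<beta> g z)
       \<and> (\<exists>C. \<forall>f \<in> bloch0 1. bloch_norm 1 (cesaro \<beta> f) \<le> C * bloch_norm 1 f)"
proof (intro conjI ballI allI exI[of _ "cesaro_norm_bound \<beta>"])
  fix f assume "f \<in> bloch0 1"
  then show "cesaro \<beta> f \<in> bloch0 1"
    and "bloch_norm 1 (cesaro \<beta> f) \<le> cesaro_norm_bound \<beta> * bloch_norm 1 f"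
    using cesaro_bloch0[OF assms] by blast+
next
  fix f g a b z assume "f \<in> bloch0 1" "g \<in> bloch0 1" "z \<in> ball (0::complex) 1"
  then show "cesaro \<beta> (\<lambda>w. a * f w + b * g w) z = a * cesaro \<beta> f z + b * cesaro \<beta> g z"
    by (intro cesaro_linear) (auto simp: bloch0_def bloch_space_def)
qed

end
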